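(* Let $A,B$ be finite-dimensional $K$-subspaces of $L$ and set $D=A_*^{-1}A\cap BB_*^{-1}$. Suppose that $AD\not\subset A$ or $DB\not\subset B$. Then there exist $K$-subspaces $A_1,B_1$ of $L$ such that: (1) $A_1\neq\{0\}$ and $B_1\neq\{0\}$; (2) $\langle A_1B_1\rangle\subset\langle AB\rangle$; (3) either $\dim_KA_1+\dim_KB_1=\dim_KA+\dim_KB$ and $\dim_KA_1>\dim_KA$, or $\dim_KA_1+\dim_KB_1>\dim_KA+\dim_KB$.
   Context: $K$ is a commutative field and $L$ is a (possibly noncommutative) division ring containing $K$ in its center. For $S\subset L$, $\langle S\rangle$ denotes the $K$-subspace of $L$ spanned by $S$. For subsets $S_1,S_2,\dots$ of $L$, $S_1S_2=\{s_1s_2\mid s_1\in S_1,s_2\in S_2\}$ (product set), and similarly for more factors. For $X\subset L$, $X_*=X\setminus\{0\}$ and $X_*^{-1}=\{x^{-1}\mid x\in X_*\}$. *)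

theory Defs
  imports Complex_Main
begin

text \<open>The field K is represented as a type 'k, embedded into the division ring 'a (= L)
  via a unital ring homomorphism emb whose image is central.\<close>

definition scl :: "('k::field \<Rightarrow> 'a::division_ring) \<Rightarrow> 'k \<Rightarrow> 'a \<Rightarrow> 'a" where
  "scl emb k x = emb k * x"

definition setprod :: "'a::division_ring set \<Rightarrow> 'a set \<Rightarrow> 'a set" where
  "setprod S T = {s * t | s t. s \<in> S \<and> t \<in> T}"

definition invnz :: "'a::division_ring set \<Rightarrow> 'a set" where
  "invnz X = inverse ` (X - {0})"

end

theory Submission
  imports Defs
begin

text \<open>
  From the hypothesis we extract an element d = a\<inverse> a' = b' b\<inverse> with
  a, b \<noteq> 0, a d \<in> A, d b \<in> B, such that A d \<subseteq> A and d B \<subseteq> B do not both hold.  Consider the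
  two pairs of subspaces
    A1 = A + A d,   B1 = {y \<in> B. d y \<in> B}   and   A2 = {x \<in> A. x d \<in> A},   B2 = B + d B.
  Both products Ai Bi lie in the span of A B, all four spaces are nonzero, and
  for an injective linear map f the Grassmann formula gives
    dim (S + f S) + dim (S \<inter> f\<inverse> S) = 2 dim S,
  so the four dimensions add up to 2 (dim A + dim B).  Hence one pair has dimension sum
  greater than dim A + dim B, or the first pair has sum exactly dim A + dim B; in the
  latter case dim A1 > dim A, since otherwise A d \<subseteq> A and d B \<subseteq> B.
\<close>

context vector_space
begin

text \<open>Finite-dimensional linear algebra in an arbitrary vector space: a subspace is
  finite-dimensional when it lies in the span of a finite set W.  The library states the
  following facts only for globally finite-dimensional spaces.\<close>

lemma independent_card_le_dim_fd:
  assumes "independent C" "C \<subseteq> S" "S \<subseteq> span W" "finite W"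
  shows "finite C \<and> card C \<le> dim S"
proof -
  obtain BS where BS: "BS \<subseteq> S" "independent BS" "S \<subseteq> span BS" "card BS = dim S"
    using basis_exists by blast
  have "finite BS"
    using independent_span_bound[OF assms(4) BS(2)] BS(1) assms(3) by blast
  moreover have "C \<subseteq> span BS"
    using assms(2) BS(3) by blast
  ultimately have "finite C \<and> card C \<le> card BS"
    using independent_span_bound[OF _ assms(1)] by blast
  then show ?thesis
    using BS(4) by simp
qed

lemma subspace_eq_if_dim_le:
  assumes "subspace S" "S \<subseteq> T" "T \<subseteq> span W" "finite W" "dim T \<le> dim S"
  shows "S = T"
proof (rule ccontr)
  assume "S \<noteq> T"
  then obtain x where x: "x \<in> T" "x \<notin> S"
    using assms(2) by blast
  obtain BS where BS: "BS \<subseteq> S" "independent BS" "S \<subseteq> span BS" "card BS = dim S"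
    using basis_exists by blast
  have "x \<notin> span BS"
    using span_minimal[OF BS(1) assms(1)] x(2) by blast
  then have indep: "independent (insert x BS)"
    using independent_insertI BS(2) by blast
  have "insert x BS \<subseteq> T"
    using x(1) BS(1) assms(2) by blast
  then have "finite BS" "card (insert x BS) \<le> dim T"
    using independent_card_le_dim_fd[OF indep _ assms(3,4)] by auto
  moreover have "x \<notin> BS"
    using BS(1) x(2) by blast
  ultimately show False
    using BS(4) assms(5) by simp
qed

text \<open>Extend a basis B of S \<inter> T to a basis C of S and then to a
  basis E = C \<union> F of S + T.  Then F \<subseteq> T, and B \<union> F is a basis of T: every t \<in> T is c + f
  with c \<in> S, f \<in> span F \<subseteq> T, so c \<in> S \<inter> T = span B.\<close>
lemma dim_sum_plus_dim_inter:
  assumes S: "subspace S" and T: "subspace T"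
    and W: "S \<subseteq> span W" "T \<subseteq> span W" "finite W"
  shows "dim {x + y |x y. x \<in> S \<and> y \<in> T} + dim (S \<inter> T) = dim S + dim T"
proof -
  let ?ST = "{x + y |x y. x \<in> S \<and> y \<in> T}"
  obtain B where B: "B \<subseteq> S \<inter> T" "independent B" "S \<inter> T \<subseteq> span B" "card B = dim (S \<inter> T)"
    using basis_exists by blast
  obtain C where C: "B \<subseteq> C" "C \<subseteq> S" "independent C" "S \<subseteq> span C"
    using maximal_independent_subset_extend[of B S] B(1,2) by blast
  obtain E where E: "C \<subseteq> E" "E \<subseteq> S \<union> T" "independent E" "S \<union> T \<subseteq> span E"
    using maximal_independent_subset_extend[of C "S \<union> T"] C(2,3) by blast
  define F where "F = E - C"
  have finE: "finite E"
    using independent_span_bound[OF W(3) E(3)] E(2) W(1,2) by blast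
  have spanC: "span C = S"
    using span_subspace[OF C(2,4) S] .
  have F_T: "F \<subseteq> T"
  proof
    fix x assume "x \<in> F"
    then have "x \<in> E" "x \<notin> C"
      by (auto simp: F_def)
    then have "x \<notin> span (E - {x})"
      using E(3) dependent_def by blast
    moreover have "C \<subseteq> E - {x}"
      using C(1) E(1) \<open>x \<notin> C\<close> by blast
    ultimately have "x \<notin> S"
      using spanC span_mono by blast
    then show "x \<in> T"
      using \<open>x \<in> E\<close> E(2) by blast
  qed
  have T_span: "T \<subseteq> span (B \<union> F)"
  proof
    fix t assume "t \<in> T"
    moreover have "E = C \<union> F"
      using E(1) F_def by blast
    ultimately have "t \<in> span (C \<union> F)"
      using E(4) by blast
    then obtain c f where cf: "c \<in> span C" "f \<in> span F" "t = c + f"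
      using span_Un by blast
    have "f \<in> T"
      using span_minimal[OF F_T T] cf(2) by blast
    then have "c \<in> S \<inter> T"
      using cf spanC \<open>t \<in> T\<close> subspace_diff[OF T] by (metis IntI add_diff_cancel_right')
    then have "c \<in> span (B \<union> F)"
      using B(3) span_mono[of B "B \<union> F"] by blast
    moreover have "f \<in> span (B \<union> F)"
      using cf(2) span_mono[of F "B \<union> F"] by blast
    ultimately show "t \<in> span (B \<union> F)"
      using cf(3) span_add by blast
  qed
  have dimS: "dim S = card C"
    using basis_card_eq_dim[OF C(2,4,3)] by simp
  have dimT: "dim T = card (B \<union> F)"
  proof -
    have "B \<union> F \<subseteq> E"
      using B(1) C(1) E(1) F_def by blast
    then show ?thesis
      using basis_card_eq_dim[OF _ T_span] independent_mono[OF E(3)] B(1) F_T by auto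
  qed
  have dimST: "dim ?ST = card E"
  proof (rule dim_unique[OF _ _ E(3) refl])
    show "E \<subseteq> ?ST"
    proof
      fix x assume "x \<in> E"
      then have "x \<in> S \<or> x \<in> T"
        using E(2) by blast
      moreover have "x = x + 0" "x = 0 + x"
        by simp_all
      ultimately show "x \<in> ?ST"
        using subspace_0[OF S] subspace_0[OF T] by blast
    qed
    show "?ST \<subseteq> span E"
      using E(4) span_add by blast
  qed
  have "card E = card C + card F"
    using finE C(1) E(1) by (simp add: F_def card_Diff_subset card_mono finite_subset)
  moreover have "card (B \<union> F) = card B + card F"
    using finE C(1) E(1) by (intro card_Un_disjoint) (auto simp: F_def intro: finite_subset)
  ultimately show ?thesis
    using B(4) dimS dimT dimST by simp
qed

end

text \<open>For a map f, the sets S + f(S) and S \<inter> f\<inverse>(S).  With f a one-sided multiplication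
  by d these are the subspaces A + A d, {x \<in> A. x d \<in> A}, etc. of the proof.\<close>
definition add_image :: "('a::ab_group_add \<Rightarrow> 'a) \<Rightarrow> 'a set \<Rightarrow> 'a set" where
  "add_image f S = {x + f y |x y. x \<in> S \<and> y \<in> S}"

definition stable_part :: "('a \<Rightarrow> 'a) \<Rightarrow> 'a set \<Rightarrow> 'a set" where
  "stable_part f S = {x \<in> S. f x \<in> S}"

context vector_space
begin

text \<open>Injective linear maps preserve dimension (the library version assumes a
  finite-dimensional domain).\<close>
lemma dim_image_inj:
  assumes "Vector_Spaces.linear scale scale f" "inj f"
  shows "dim (f ` S) = dim S"
proof -
  interpret f: Vector_Spaces.linear scale scale f by fact
  obtain B where B: "B \<subseteq> S" "independent B" "S \<subseteq> span B" "card B = dim S"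
    using basis_exists by blast
  have "f ` S \<subseteq> span (f ` B)"
    using B(3) f.span_image by blast
  moreover have "independent (f ` B)"
    using f.independent_injective_image[OF B(2)] assms(2) inj_on_subset by blast
  moreover have "card (f ` B) = card B"
    using card_image assms(2) inj_on_subset by blast
  ultimately show ?thesis
    using basis_card_eq_dim[of "f ` B" "f ` S"] image_mono[OF B(1), of f] B(4) by simp
qed

context
  fixes f and S and W
  assumes f: "Vector_Spaces.linear scale scale f" and S: "S = span W" "finite W"
begin

interpretation f: Vector_Spaces.linear scale scale f by (fact f)

lemma subspace_add_image: "subspace (add_image f S)"
proof -
  have "add_image f S = {x + y |x y. x \<in> S \<and> y \<in> f ` S}"
    by (auto simp: add_image_def)
  then show ?thesis
    using subspace_sums f.subspace_image S(1) by simp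
qed

lemma subspace_stable_part: "subspace (stable_part f S)"
proof -
  have "stable_part f S = S \<inter> f -` S"
    by (auto simp: stable_part_def)
  then show ?thesis
    using subspace_inter f.subspace_vimage S(1) by simp
qed

lemma subset_add_image: "S \<subseteq> add_image f S"
proof
  fix x assume "x \<in> S"
  moreover have "x = x + f 0"
    by simp
  ultimately show "x \<in> add_image f S"
    unfolding add_image_def using S(1) span_zero by blast
qed

lemma add_image_finite_dim: "add_image f S \<subseteq> span (W \<union> f ` W)"
proof
  fix z assume "z \<in> add_image f S"
  then obtain x y where "z = x + f y" "x \<in> span W" "y \<in> span W"
    unfolding add_image_def S(1) by blast
  moreover have "f y \<in> span (f ` W)"
    using f.span_image \<open>y \<in> span W\<close> by blast
  ultimately show "z \<in> span (W \<union> f ` W)"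
    using span_mono[of W "W \<union> f ` W"] span_mono[of "f ` W" "W \<union> f ` W"] span_add by blast
qed

text \<open>The dimension count: f maps S \<inter> f\<inverse>(S) isomorphically onto S \<inter> f(S), so Grassmann's
  formula for S and f(S) gives dim (S + f S) + dim (S \<inter> f\<inverse> S) = 2 dim S.\<close>
lemma dim_add_image_plus_dim_stable_part:
  assumes "inj f"
  shows "dim (add_image f S) + dim (stable_part f S) = 2 * dim S"
proof -
  have fS: "f ` S = span (f ` W)"
    using f.span_image S(1) by simp
  have fin: "S \<subseteq> span (W \<union> f ` W)" "f ` S \<subseteq> span (W \<union> f ` W)" "finite (W \<union> f ` W)"
    using S span_mono[of W "W \<union> f ` W"] fS span_mono[of "f ` W" "W \<union> f ` W"] by auto
  have "add_image f S = {x + y |x y. x \<in> S \<and> y \<in> f ` S}"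
    by (auto simp: add_image_def)
  then have "dim (add_image f S) + dim (S \<inter> f ` S) = dim S + dim (f ` S)"
    using dim_sum_plus_dim_inter[OF _ _ fin] S(1) fS by simp
  moreover have "f ` stable_part f S = S \<inter> f ` S"
    by (auto simp: stable_part_def)
  ultimately show ?thesis
    using dim_image_inj[OF f assms] by (metis mult_2)
qed

lemma invariant_if_dim_add_image_le:
  assumes "dim (add_image f S) \<le> dim S"
  shows "f ` S \<subseteq> S"
proof -
  have "S = add_image f S"
    using subspace_eq_if_dim_le[OF _ subset_add_image add_image_finite_dim _ assms] S by simp
  then show ?thesis
    using subset_add_image S(1) span_zero unfolding add_image_def by force
qed

lemma invariant_if_dim_stable_part_ge:
  assumes "dim S \<le> dim (stable_part f S)"
  shows "f ` S \<subseteq> S"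
proof -
  have "stable_part f S = S"
    using subspace_eq_if_dim_le[OF subspace_stable_part _ _ S(2) assms] S(1)
    by (auto simp: stable_part_def)
  then show ?thesis
    unfolding stable_part_def by blast
qed

end

end

text \<open>Unfolding the hypothesis: some d \<in> A_*\<inverse> A \<inter> B B_*\<inverse> does not stabilise A on the right or B
  on the left; writing d = a\<inverse> a' = b' b\<inverse> gives nonzero a \<in> A, b \<in> B with a d \<in> A, d b \<in> B.\<close>
lemma unstable_quotient_witness:
  fixes A B :: "'a::division_ring set"
  assumes "let D = setprod (invnz A) A \<inter> setprod B (invnz B)
           in \<not> setprod A D \<subseteq> A \<or> \<not> setprod D B \<subseteq> B"
  obtains d a b where "a \<in> A" "a \<noteq> 0" "a * d \<in> A" "b \<in> B" "b \<noteq> 0" "d * b \<in> B"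
    and "\<not> (\<lambda>x. x * d) ` A \<subseteq> A \<or> \<not> (\<lambda>x. d * x) ` B \<subseteq> B"
proof -
  from assms obtain d where
    dA: "d \<in> setprod (invnz A) A" and dB: "d \<in> setprod B (invnz B)" and
    unstable: "\<not> (\<lambda>x. x * d) ` A \<subseteq> A \<or> \<not> (\<lambda>x. d * x) ` B \<subseteq> B"
    unfolding Let_def setprod_def by blast
  from dA obtain a a' where "a \<in> A" "a \<noteq> 0" "a' \<in> A" "d = inverse a * a'"
    unfolding setprod_def invnz_def by blast
  then have "a * d \<in> A"
    by (simp add: mult.assoc[symmetric])
  from dB obtain b b' where "b \<in> B" "b \<noteq> 0" "b' \<in> B" "d = b' * inverse b"
    unfolding setprod_def invnz_def by blast
  then have "d * b \<in> B"
    by (simp add: mult.assoc)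
  show thesis
    using that \<open>a \<in> A\<close> \<open>a \<noteq> 0\<close> \<open>a * d \<in> A\<close> \<open>b \<in> B\<close> \<open>b \<noteq> 0\<close> \<open>d * b \<in> B\<close> unstable
    by blast
qed

locale central_embedding =
  fixes emb :: "'k::field \<Rightarrow> 'a::division_ring"
  assumes emb_one: "emb 1 = 1"
    and emb_add: "\<And>x y. emb (x + y) = emb x + emb y"
    and emb_mult: "\<And>x y. emb (x * y) = emb x * emb y"
    and emb_central: "\<And>k x. emb k * x = x * emb k"
begin

sublocale V: vector_space "scl emb"
  by unfold_locales
    (simp_all add: scl_def emb_add emb_mult emb_one distrib_left distrib_right mult.assoc)

text \<open>Right multiplication is K-linear; left multiplication is K-linear because K is central.\<close>
lemma linear_right_mult: "Vector_Spaces.linear (scl emb) (scl emb) (\<lambda>x. x * d)"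
  unfolding Vector_Spaces.linear_iff
  using V.vector_space_axioms by (simp add: scl_def distrib_right mult.assoc)

lemma linear_left_mult: "Vector_Spaces.linear (scl emb) (scl emb) (\<lambda>x. d * x)"
  unfolding Vector_Spaces.linear_iff
  using V.vector_space_axioms by (simp add: scl_def distrib_left) (metis emb_central mult.assoc)

text \<open>(x + y d) z = x z + y (d z): the product of A + A d with {z \<in> B. d z \<in> B} stays in
  the span of A B.\<close>
lemma span_setprod_add_image_right:
  "V.span (setprod (add_image (\<lambda>x. x * d) A) (stable_part (\<lambda>x. d * x) B))
     \<subseteq> V.span (setprod A B)"
proof (rule V.span_minimal[OF _ V.subspace_span], rule subsetI)
  fix w assume "w \<in> setprod (add_image (\<lambda>x. x * d) A) (stable_part (\<lambda>x. d * x) B)"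
  then obtain x y z where "x \<in> A" "y \<in> A" "z \<in> B" "d * z \<in> B" "w = x * z + y * (d * z)"
    unfolding setprod_def add_image_def stable_part_def
    by (auto simp: distrib_right mult.assoc)
  then show "w \<in> V.span (setprod A B)"
    unfolding setprod_def by (blast intro: V.span_add V.span_base)
qed

text \<open>x (y + d z) = x y + (x d) z: the product of {x \<in> A. x d \<in> A} with B + d B stays in
  the span of A B.\<close>
lemma span_setprod_stable_part_right:
  "V.span (setprod (stable_part (\<lambda>x. x * d) A) (add_image (\<lambda>x. d * x) B))
     \<subseteq> V.span (setprod A B)"
proof (rule V.span_minimal[OF _ V.subspace_span], rule subsetI)
  fix w assume "w \<in> setprod (stable_part (\<lambda>x. x * d) A) (add_image (\<lambda>x. d * x) B)"
  then obtain x y z where "x \<in> A" "x * d \<in> A" "y \<in> B" "z \<in> B" "w = x * y + (x * d) * z"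
    unfolding setprod_def add_image_def stable_part_def
    by (auto simp: distrib_left mult.assoc)
  then show "w \<in> V.span (setprod A B)"
    unfolding setprod_def by (blast intro: V.span_add V.span_base)
qed

lemma exists_larger_pair:
  fixes A B :: "'a set" and a b d :: 'a
  assumes A: "A = V.span SA" "finite SA" and B: "B = V.span SB" "finite SB"
    and a: "a \<in> A" "a \<noteq> 0" "a * d \<in> A" and b: "b \<in> B" "b \<noteq> 0" "d * b \<in> B"
    and unstable: "\<not> (\<lambda>x. x * d) ` A \<subseteq> A \<or> \<not> (\<lambda>x. d * x) ` B \<subseteq> B"
  shows "\<exists>A1 B1. V.subspace A1 \<and> V.subspace B1 \<and> A1 \<noteq> {0} \<and> B1 \<noteq> {0}
      \<and> V.span (setprod A1 B1) \<subseteq> V.span (setprod A B)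
      \<and> ((V.dim A1 + V.dim B1 = V.dim A + V.dim B \<and> V.dim A1 > V.dim A)
         \<or> V.dim A1 + V.dim B1 > V.dim A + V.dim B)"
proof -
  let ?R = "\<lambda>x. x * d" and ?L = "\<lambda>x. d * x"
  have "d \<noteq> 0"
    using unstable A(1) B(1) V.span_zero by auto
  then have inj: "inj ?R" "inj ?L"
    by (auto intro: injI)
  note R = linear_right_mult[of d] and L = linear_left_mult[of d]
  define A1 B1 A2 B2
    where "A1 = add_image ?R A" and "B1 = stable_part ?L B"
      and "A2 = stable_part ?R A" and "B2 = add_image ?L B"
  have total: "(V.dim A1 + V.dim B1) + (V.dim A2 + V.dim B2) = 2 * (V.dim A + V.dim B)"
    using V.dim_add_image_plus_dim_stable_part[OF R A inj(1)]
      V.dim_add_image_plus_dim_stable_part[OF L B inj(2)]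
    unfolding A1_def B1_def A2_def B2_def by simp
  have sub: "V.subspace A1" "V.subspace B1" "V.subspace A2" "V.subspace B2"
    unfolding A1_def B1_def A2_def B2_def
    using V.subspace_add_image[OF R A] V.subspace_stable_part[OF L B]
      V.subspace_stable_part[OF R A] V.subspace_add_image[OF L B] by auto
  have nonzero: "A1 \<noteq> {0}" "B1 \<noteq> {0}" "A2 \<noteq> {0}" "B2 \<noteq> {0}"
    using a b V.subset_add_image[OF R A] V.subset_add_image[OF L B]
    unfolding A1_def B1_def A2_def B2_def stable_part_def by auto
  have products: "V.span (setprod A1 B1) \<subseteq> V.span (setprod A B)"
    "V.span (setprod A2 B2) \<subseteq> V.span (setprod A B)"
    unfolding A1_def B1_def A2_def B2_def
    by (rule span_setprod_add_image_right span_setprod_stable_part_right)+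
  have "\<not> V.dim A1 + V.dim B1 > V.dim A + V.dim B \<Longrightarrow> \<not> V.dim A2 + V.dim B2 > V.dim A + V.dim B
      \<Longrightarrow> V.dim A1 + V.dim B1 = V.dim A + V.dim B"
    using total by presburger
  then consider "V.dim A1 + V.dim B1 > V.dim A + V.dim B"
    | "V.dim A2 + V.dim B2 > V.dim A + V.dim B"
    | "V.dim A1 + V.dim B1 = V.dim A + V.dim B"
    by blast
  then show ?thesis
  proof cases
    case 1
    then show ?thesis using sub nonzero products by blast
  next
    case 2
    then show ?thesis using sub nonzero products by blast
  next
    case balanced: 3
    have "V.dim A1 > V.dim A"
    proof (rule ccontr)
      assume "\<not> V.dim A1 > V.dim A"
      then have "V.dim A1 \<le> V.dim A" and "V.dim B \<le> V.dim B1"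
        using balanced by simp_all
      then have "?R ` A \<subseteq> A" and "?L ` B \<subseteq> B"
        unfolding A1_def B1_def
        using V.invariant_if_dim_add_image_le[OF R A] V.invariant_if_dim_stable_part_ge[OF L B]
        by blast+
      then show False
        using unstable by blast
    qed
    then show ?thesis
      using balanced sub nonzero products by blast
  qed
qed

end

theorem mainTheorem3:
  fixes emb :: "'k::field \<Rightarrow> 'a::division_ring"
    and A B :: "'a set"
  assumes emb_one: "emb 1 = 1"
    and emb_add: "\<And>x y. emb (x + y) = emb x + emb y"
    and emb_mult: "\<And>x y. emb (x * y) = emb x * emb y"
    and emb_central: "\<And>k x. emb k * x = x * emb k"
    and A_sub: "module.subspace (scl emb) A"
    and B_sub: "module.subspace (scl emb) B"
    and A_fin: "\<exists>S. finite S \<and> A = module.span (scl emb) S"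
    and B_fin: "\<exists>S. finite S \<and> B = module.span (scl emb) S"
    and not_stab: "let D = setprod (invnz A) A \<inter> setprod B (invnz B)
                   in \<not> setprod A D \<subseteq> A \<or> \<not> setprod D B \<subseteq> B"
  shows "\<exists>A1 B1. module.subspace (scl emb) A1 \<and> module.subspace (scl emb) B1
      \<and> A1 \<noteq> {0} \<and> B1 \<noteq> {0}
      \<and> module.span (scl emb) (setprod A1 B1) \<subseteq> module.span (scl emb) (setprod A B)
      \<and> ((vector_space.dim (scl emb) A1 + vector_space.dim (scl emb) B1
            = vector_space.dim (scl emb) A + vector_space.dim (scl emb) B
          \<and> vector_space.dim (scl emb) A1 > vector_space.dim (scl emb) A)
         \<or> vector_space.dim (scl emb) A1 + vector_space.dim (scl emb) B1
            > vector_space.dim (scl emb) A + vector_space.dim (scl emb) B)"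
proof -
  interpret central_embedding emb
    using emb_one emb_add emb_mult emb_central by unfold_locales
  obtain SA SB where A: "A = V.span SA" "finite SA" and B: "B = V.span SB" "finite SB"
    using A_fin B_fin by blast
  obtain d a b where "a \<in> A" "a \<noteq> 0" "a * d \<in> A" "b \<in> B" "b \<noteq> 0" "d * b \<in> B"
    and "\<not> (\<lambda>x. x * d) ` A \<subseteq> A \<or> \<not> (\<lambda>x. d * x) ` B \<subseteq> B"
    by (rule unstable_quotient_witness[OF not_stab])
  then show ?thesis
    by (rule exists_larger_pair[OF A B])
qed

end
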